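(* Consider a run of Algorithm 1 (described in the context) on the one-dimensional corrupted problem with absolute loss. For any interval $I_j$ appearing in the partition during the run: if $I_j$ is marked dubious, then $I_j$ is bisected after $O(\log T)$ queries on $I_j$; if $I_j$ is not marked dubious, then $I_j$ is bisected after $O(1)$ queries on $I_j$. Here a query on $I_j$ is a round in which $I_j$ is the partition interval containing the context, and the constants in $O(\cdot)$ are absolute.
   Context: Problem. Fix $L>0$ and $T\ge 2$. An adversary fixes an unknown $L$-Lipschitz $f:[0,1]\to[0,L]$. In each round $t=1,\dots,T$: the adversary chooses $x_t\in[0,1]$; the learner observes $x_t$ and guesses $q_t$; the adversary observes $q_t$ and sends $\sigma_t\in\{0,1\}$, equal to $\sigma(q_t-f(x_t))$ in uncorrupted rounds and $1-\sigma(q_t-f(x_t))$ in corrupted rounds, where $\sigma(u)=1$ if $u>0$ and $0$ if $u\le 0$; the adversary chooses adaptively which rounds to corrupt, at most $C$ in total ($C$ unknown to the learner). $\mathtt{len}(I)$ is the length of an interval $I$. $\mathtt{MidpointQuery}(I,Y)$, $Y=[a,b]$: guess $q=(a+b)/2$; if $\sigma_t=1$ return $Y\cap[0,q+L\,\mathtt{len}(I)]$, if $\sigma_t=0$ return $Y\cap[q-L\,\mathtt{len}(I),L]$. Algorithm 1. Maintain a partition of $[0,1]$ into intervals; each $I_j$ carries a checking interval $S_j$, range $Y_j$, and a "dubious" flag (initially unset). Initially: $8$ intervals of length $1/8$, each with $S_j=Y_j=[0,L]$. In round $t$, with $I_j$ the partition interval containing $x_t$: (i) if some endpoint of $S_j$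 has not been guessed in a round whose context lay in $I_j$, guess such an endpoint; if the guess was $\min(S_j)$ with $\sigma_t=1$ or $\max(S_j)$ with $\sigma_t=0$, mark $I_j$ dubious; once both endpoints have been queried, set $Y_j=[0,L]$ if dubious and otherwise $Y_j=[\min(S_j)-L\,\mathtt{len}(I_j),\max(S_j)+L\,\mathtt{len}(I_j)]\cap[0,L]$. (ii) Otherwise set $Y_j:=\mathtt{MidpointQuery}(I_j,Y_j)$; if then $\mathtt{len}(Y_j)<\max(4L\,\mathtt{len}(I_j),4L/T)$, bisect $I_j$ into its two halves, which replace it, each with checking interval equal to the current $Y_j$ (endpoints unqueried, not dubious). *)

theory Defs
  imports "HOL-Analysis.Analysis"
begin

text \<open>Model of Algorithm 1 (one-dimensional corrupted contextual search).
  Intervals are pairs (lo, hi) standing for the closed interval [lo, hi].\<close>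

record cell =
  iv  :: "real \<times> real"
  chk :: "real \<times> real"
  rng :: "real \<times> real"
  dub :: bool
  qlo :: bool             \<comment> \<open>min(S_j) already guessed in a round with context in I_j\<close>
  qhi :: bool             \<comment> \<open>max(S_j) already guessed in a round with context in I_j\<close>

definition len :: "real \<times> real \<Rightarrow> real" where
  "len I = snd I - fst I"

definition sig :: "real \<Rightarrow> bool" where
  "sig u = (u > 0)"

definition midpoint_query :: "real \<Rightarrow> real \<times> real \<Rightarrow> real \<times> real \<Rightarrow> bool \<Rightarrow> real \<times> real" where
  "midpoint_query L I Y s =
     (let q = (fst Y + snd Y) / 2 in
      if s then (max (fst Y) 0, min (snd Y) (q + L * len I))
      else (max (fst Y) (q - L * len I), min (snd Y) L))"

definition in_cell :: "real \<Rightarrow> cell \<Rightarrow> bool" where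
  "in_cell x c = (fst (iv c) \<le> x \<and> (x < snd (iv c) \<or> (x = snd (iv c) \<and> snd (iv c) = 1)))"

definition guess :: "cell \<Rightarrow> real" where
  "guess c = (if \<not> qlo c then fst (chk c)
              else if \<not> qhi c then snd (chk c)
              else (fst (rng c) + snd (rng c)) / 2)"

definition fresh_cell :: "real \<times> real \<Rightarrow> real \<times> real \<Rightarrow> cell" where
  "fresh_cell I S = \<lparr>iv = I, chk = S, rng = S, dub = False, qlo = False, qhi = False\<rparr>"

definition update :: "real \<Rightarrow> nat \<Rightarrow> cell \<Rightarrow> bool \<Rightarrow> cell list" where
  "update L T c s =
    (if \<not> (qlo c \<and> qhi c) then
       (let q = guess c;
            lo' = (qlo c \<or> q = fst (chk c));
            hi' = (qhi c \<or> q = snd (chk c));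
            d' = (dub c \<or> (q = fst (chk c) \<and> s) \<or> (q = snd (chk c) \<and> \<not> s));
            Y' = (if lo' \<and> hi' then
                    (if d' then (0, L)
                     else (max (fst (chk c) - L * len (iv c)) 0,
                           min (snd (chk c) + L * len (iv c)) L))
                  else rng c)
        in [c\<lparr>dub := d', qlo := lo', qhi := hi', rng := Y'\<rparr>])
     else
       (let Y' = midpoint_query L (iv c) (rng c) s;
            a = fst (iv c); b = snd (iv c); m = (a + b) / 2
        in if len Y' < max (4 * L * len (iv c)) (4 * L / real T)
           then [fresh_cell (a, m) Y', fresh_cell (m, b) Y']
           else [c\<lparr>rng := Y'\<rparr>]))"

definition init_part :: "real \<Rightarrow> cell list" where
  "init_part L = map (\<lambda>k. fresh_cell (real k / 8, real (k + 1) / 8) (0, L)) [0..<8]"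

text \<open>A round record: (context x_t, guess q_t, feedback sigma_t, corrupted?, queried interval).\<close>
type_synonym round_rec = "real \<times> real \<times> bool \<times> bool \<times> (real \<times> real)"

definition public_hist :: "round_rec list \<Rightarrow> (real \<times> real \<times> bool) list" where
  "public_hist rs = map (\<lambda>(x, q, s, _, _). (x, q, s)) rs"

text \<open>The adaptive adversary: AX chooses the context from the history of contexts,
  guesses and feedbacks; AC decides whether to corrupt the current round, after
  seeing the history, the current context and the current guess.\<close>
fun run :: "real \<Rightarrow> nat \<Rightarrow> (real \<Rightarrow> real) \<Rightarrow> ((real \<times> real \<times> bool) list \<Rightarrow> real)
             \<Rightarrow> ((real \<times> real \<times> bool) list \<Rightarrow> real \<Rightarrow> real \<Rightarrow> bool)
             \<Rightarrow> nat \<Rightarrow> cell list \<times> round_rec list" where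
  "run L T f AX AC 0 = (init_part L, [])"
| "run L T f AX AC (Suc t) =
     (let (P, rs) = run L T f AX AC t;
          h = public_hist rs;
          x = AX h
      in case find (in_cell x) P of
           None \<Rightarrow> (P, rs)
         | Some c \<Rightarrow>
             (let q = guess c;
                  cor = AC h x q;
                  s = (if cor then \<not> sig (q - f x) else sig (q - f x))
              in (concat (map (\<lambda>c'. if c' = c then update L T c s else [c']) P),
                  rs @ [(x, q, s, cor, iv c)])))"

definition num_corrupted :: "round_rec list \<Rightarrow> nat" where
  "num_corrupted rs = length (filter (\<lambda>(_, _, _, cor, _). cor) rs)"

definition num_queries :: "round_rec list \<Rightarrow> real \<times> real \<Rightarrow> nat" where
  "num_queries rs I = length (filter (\<lambda>(_, _, _, _, J). J = I) rs)"

definition appears :: "real \<Rightarrow> nat \<Rightarrow> (real \<Rightarrow> real) \<Rightarrow> ((real \<times> real \<times> bool) list \<Rightarrow> real)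
             \<Rightarrow> ((real \<times> real \<times> bool) list \<Rightarrow> real \<Rightarrow> real \<Rightarrow> bool) \<Rightarrow> real \<times> real \<Rightarrow> bool" where
  "appears L T f AX AC I = (\<exists>t\<le>T. \<exists>c\<in>set (fst (run L T f AX AC t)). iv c = I)"

definition marked_dubious :: "real \<Rightarrow> nat \<Rightarrow> (real \<Rightarrow> real) \<Rightarrow> ((real \<times> real \<times> bool) list \<Rightarrow> real)
             \<Rightarrow> ((real \<times> real \<times> bool) list \<Rightarrow> real \<Rightarrow> real \<Rightarrow> bool) \<Rightarrow> real \<times> real \<Rightarrow> bool" where
  "marked_dubious L T f AX AC I = (\<exists>t\<le>T. \<exists>c\<in>set (fst (run L T f AX AC t)). iv c = I \<and> dub c)"

end

theory Submission
  imports Defs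
begin

text \<open>
  Let I be a partition interval of length l with checking interval S. Its first (at most) two
  queries guess the endpoints of S; afterwards the range Y has length at most L if I is dubious
  and at most len S + 2 L l otherwise, and len S < max (8 L l) (4 L / T) because S is the range
  of the parent at the moment the parent was bisected. Every midpoint query maps the excess
  len Y - 2 L l to at most half of itself, and I is bisected as soon as
  len Y < max (4 L l) (4 L / T). Hence, while I survives k midpoint queries,
  2^k * 2 L max l (1/T) is at most L in the dubious case, giving 2^k <= T/2, and at most
  8 L max l (1/T) otherwise, giving k <= 2. A bisected interval never reappears, because all
  later cells are strictly shorter pieces of it or lie outside it, so its count is frozen.
\<close>

definition apart :: "real \<times> real \<Rightarrow> real \<times> real \<Rightarrow> bool" where
  "apart I J \<longleftrightarrow> snd I \<le> fst J \<or> snd J \<le> fst I"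

definition subinterval :: "real \<times> real \<Rightarrow> real \<times> real \<Rightarrow> bool" where
  "subinterval J I \<longleftrightarrow> fst I \<le> fst J \<and> snd J \<le> snd I"

lemma apart_commute: "apart I J \<longleftrightarrow> apart J I"
  unfolding apart_def by auto

lemma apart_subinterval: "apart I K \<Longrightarrow> subinterval J I \<Longrightarrow> apart J K"
  unfolding apart_def subinterval_def by auto

lemma subinterval_not_apart: "subinterval J I \<Longrightarrow> fst J < snd J \<Longrightarrow> \<not> apart J I"
  unfolding apart_def subinterval_def by auto

lemma len_subinterval: "subinterval J I \<Longrightarrow> len J \<le> len I"
  unfolding subinterval_def len_def by simp

definition split_threshold :: "real \<Rightarrow> nat \<Rightarrow> real \<Rightarrow> real" where
  "split_threshold L T l = max (4 * L * l) (4 * L / real T)"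

lemma split_threshold_eq: "0 \<le> L \<Longrightarrow> split_threshold L T l = 4 * L * max l (1 / real T)"
  unfolding split_threshold_def using max_mult_distrib_left[of "4 * L" l "1 / real T"] by simp

lemma len_midpoint_query_le: "len (midpoint_query L I Y s) \<le> len Y / 2 + L * len I"
  unfolding midpoint_query_def len_def Let_def by (cases s) (auto simp: min_def max_def field_simps)

definition endpoints_queried :: "cell \<Rightarrow> nat" where
  "endpoints_queried c = of_bool (qlo c) + of_bool (qhi c)"

lemma endpoints_queried_le: "endpoints_queried c \<le> 2"
  by (simp add: endpoints_queried_def)

lemma update_endpoint_phase:
  assumes "\<not> (qlo c \<and> qhi c)" and "0 \<le> L" and "0 \<le> len (iv c)"
  obtains c' where "update L T c s = [c']" "iv c' = iv c" "chk c' = chk c"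
    "endpoints_queried c < endpoints_queried c'"
    "qlo c' \<and> qhi c' \<Longrightarrow> len (rng c') - 2 * L * len (iv c) \<le> (if dub c' then L else len (chk c))"
proof -
  define q where "q = guess c"
  define lo where "lo = (qlo c \<or> q = fst (chk c))"
  define hi where "hi = (qhi c \<or> q = snd (chk c))"
  define d where "d = (dub c \<or> (q = fst (chk c) \<and> s) \<or> (q = snd (chk c) \<and> \<not> s))"
  define Y where "Y = (if lo \<and> hi then
                    (if d then (0, L)
                     else (max (fst (chk c) - L * len (iv c)) 0, min (snd (chk c) + L * len (iv c)) L))
                  else rng c)"
  let ?c' = "c\<lparr>dub := d, qlo := lo, qhi := hi, rng := Y\<rparr>"
  have "update L T c s = [?c']"
    using assms(1) unfolding update_def Let_def q_def lo_def hi_def d_def Y_def by simp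
  moreover have "endpoints_queried c < endpoints_queried ?c'"
    using assms(1) by (auto simp: endpoints_queried_def lo_def hi_def q_def guess_def)
  moreover have "len Y - 2 * L * len (iv c) \<le> (if d then L else len (chk c))" if "lo \<and> hi"
    using that assms(2,3) by (auto simp: Y_def len_def min_def max_def)
  ultimately show ?thesis
    using that[of ?c'] by simp
qed

lemma update_midpoint_phase:
  fixes L :: real and s :: bool
  assumes "qlo c \<and> qhi c"
  defines "Y \<equiv> midpoint_query L (iv c) (rng c) s"
    and "m \<equiv> (fst (iv c) + snd (iv c)) / 2"
  shows "update L T c s =
    (if len Y < split_threshold L T (len (iv c))
     then [fresh_cell (fst (iv c), m) Y, fresh_cell (m, snd (iv c)) Y]
     else [c\<lparr>rng := Y\<rparr>])"
  using assms unfolding update_def split_threshold_def Let_def by simp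

text \<open>The checking interval of a cell created by a bisection is the range of its parent at that
  moment, which lay below the parent's split threshold; the parent is twice as long.\<close>
definition valid_cell :: "real \<Rightarrow> nat \<Rightarrow> cell \<Rightarrow> bool" where
  "valid_cell L T c \<longleftrightarrow>
     fst (iv c) < snd (iv c) \<and> len (chk c) \<le> split_threshold L T (2 * len (iv c))"

lemma mem_update_cellD:
  assumes c: "valid_cell L T c" and e: "e \<in> set (update L T c s)" and L: "0 \<le> L"
  shows "valid_cell L T e \<and> subinterval (iv e) (iv c) \<and>
    (iv e = iv c \<or> len (iv e) < len (iv c) \<and> \<not> qlo e)"
proof (cases "qlo c \<and> qhi c")
  case False
  have "0 \<le> len (iv c)" using c by (simp add: valid_cell_def len_def)
  then obtain c' where "update L T c s = [c']" "iv c' = iv c" "chk c' = chk c"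
    using update_endpoint_phase[OF False L] by blast
  then show ?thesis using c e by (simp add: valid_cell_def subinterval_def)
next
  case True
  define Y where "Y = midpoint_query L (iv c) (rng c) s"
  define m where "m = (fst (iv c) + snd (iv c)) / 2"
  show ?thesis
  proof (cases "len Y < split_threshold L T (len (iv c))")
    case split: True
    then have "e = fresh_cell (fst (iv c), m) Y \<or> e = fresh_cell (m, snd (iv c)) Y"
      using e update_midpoint_phase[OF True] unfolding Y_def m_def by auto
    moreover have "2 * len (fst (iv c), m) = len (iv c)" "2 * len (m, snd (iv c)) = len (iv c)"
      unfolding m_def len_def by (simp_all add: field_simps)
    moreover have "fst (iv c) < m" "m < snd (iv c)" "0 < len (iv c)"
      using c unfolding m_def valid_cell_def len_def by simp_all
    ultimately show ?thesis
      using split c by (auto simp: valid_cell_def subinterval_def fresh_cell_def)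
  next
    case False
    then have "e = c\<lparr>rng := Y\<rparr>"
      using e update_midpoint_phase[OF True] unfolding Y_def by auto
    then show ?thesis using c by (simp add: valid_cell_def subinterval_def)
  qed
qed

lemma pairwise_apart_update: "pairwise (\<lambda>d e. apart (iv d) (iv e)) (set (update L T c s))"
proof (cases "qlo c \<and> qhi c")
  case False
  then show ?thesis by (simp add: update_def Let_def)
next
  case True
  then show ?thesis
    by (auto simp: update_midpoint_phase pairwise_def apart_def fresh_cell_def)
qed

definition range_budget :: "real \<Rightarrow> nat \<Rightarrow> cell \<Rightarrow> real" where
  "range_budget L T c = (if dub c then L else split_threshold L T (2 * len (iv c)))"

text \<open>The count n includes the (at most two) endpoint queries, hence the factor 4.\<close>
definition live_count_ok :: "real \<Rightarrow> nat \<Rightarrow> cell \<Rightarrow> nat \<Rightarrow> bool" where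
  "live_count_ok L T c n \<longleftrightarrow>
     (if qlo c \<and> qhi c
      then 2 ^ n * (len (rng c) - 2 * L * len (iv c)) \<le> 4 * range_budget L T c \<and>
           (n \<le> 2 \<or> split_threshold L T (len (iv c)) \<le> len (rng c))
      else n \<le> endpoints_queried c)"

lemma live_count_update:
  assumes L: "0 \<le> L" and c: "valid_cell L T c" and n: "live_count_ok L T c n"
    and e: "e \<in> set (update L T c s)" and iv_e: "iv e = iv c"
  shows "live_count_ok L T e (Suc n)"
proof (cases "qlo c \<and> qhi c")
  case False
  have "0 \<le> len (iv c)" using c by (simp add: valid_cell_def len_def)
  then obtain c' where u: "update L T c s = [c']" and iv: "iv c' = iv c"
    and flags: "endpoints_queried c < endpoints_queried c'"
    and rng: "qlo c' \<and> qhi c' \<Longrightarrow>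
      len (rng c') - 2 * L * len (iv c) \<le> (if dub c' then L else len (chk c))"
    using update_endpoint_phase[OF False L] by blast
  have e_eq: "e = c'" using e u by simp
  have le_flags: "Suc n \<le> endpoints_queried c'" using n False flags by (simp add: live_count_ok_def)
  show ?thesis
  proof (cases "qlo c' \<and> qhi c'")
    case both: True
    define x where "x = len (rng c') - 2 * L * len (iv c')"
    have x: "x \<le> range_budget L T c'"
      using rng[OF both] c iv by (auto simp: x_def range_budget_def valid_cell_def)
    have "0 \<le> range_budget L T c'" using L by (simp add: range_budget_def split_threshold_def le_max_iff_disj)
    moreover have "(2::real) ^ Suc n \<le> 2 ^ 2"
      using le_flags endpoints_queried_le[of c'] by (intro power_increasing) auto
    ultimately have "2 ^ Suc n * x \<le> 4 * range_budget L T c'"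
      using x by (cases "x \<le> 0") (auto intro: order_trans[OF mult_right_mono] mult_nonpos_nonneg)
    then show ?thesis
      using both le_flags endpoints_queried_le[of c'] by (simp add: e_eq live_count_ok_def x_def)
  next
    case False
    then show ?thesis using le_flags by (auto simp: e_eq live_count_ok_def)
  qed
next
  case True
  define Y where "Y = midpoint_query L (iv c) (rng c) s"
  define excess where "excess Z = len Z - 2 * L * len (iv c)" for Z
  have no_split: "\<not> len Y < split_threshold L T (len (iv c))"
  proof
    assume "len Y < split_threshold L T (len (iv c))"
    then have "iv e = (fst (iv c), (fst (iv c) + snd (iv c)) / 2) \<or>
               iv e = ((fst (iv c) + snd (iv c)) / 2, snd (iv c))"
      using e update_midpoint_phase[OF True] unfolding Y_def by (auto simp: fresh_cell_def)
    then show False using iv_e c by (auto simp: valid_cell_def prod_eq_iff)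
  qed
  then have e_eq: "e = c\<lparr>rng := Y\<rparr>"
    using e update_midpoint_phase[OF True] unfolding Y_def by auto
  have "excess Y \<le> excess (rng c) / 2"
    using len_midpoint_query_le[of L "iv c" "rng c" s] unfolding excess_def Y_def by simp
  then have "2 ^ Suc n * excess Y \<le> 2 ^ n * excess (rng c)"
    by (simp add: mult_left_mono)
  also have "\<dots> \<le> 4 * range_budget L T c"
    using n True by (simp add: live_count_ok_def excess_def)
  finally have "2 ^ Suc n * excess Y \<le> 4 * range_budget L T c" .
  moreover have "range_budget L T e = range_budget L T c"
    by (simp add: e_eq range_budget_def)
  ultimately show ?thesis
    using True no_split by (simp add: e_eq live_count_ok_def excess_def)
qed

definition query_bound :: "nat \<Rightarrow> bool \<Rightarrow> nat \<Rightarrow> bool" where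
  "query_bound T d n \<longleftrightarrow> n \<le> 5 \<or> d \<and> 2 ^ n \<le> 4 * T"

lemma query_bound_Suc: "query_bound T d (Suc n) \<Longrightarrow> query_bound T d n"
  unfolding query_bound_def by (auto intro: order_trans[OF power_increasing[of n "Suc n"]])

lemma query_bound_mono: "query_bound T d n \<Longrightarrow> (d \<Longrightarrow> d') \<Longrightarrow> query_bound T d' n"
  unfolding query_bound_def by blast

lemma live_count_bound:
  assumes L: "0 < L" and T: "0 < T" and c: "valid_cell L T c" and n: "live_count_ok L T c n"
  shows "query_bound T (dub c) (Suc n)"
proof (cases "qlo c \<and> qhi c \<and> 2 < n")
  case False
  then have "n \<le> 2"
    using n endpoints_queried_le[of c] by (auto simp: live_count_ok_def split: if_splits)
  then show ?thesis by (simp add: query_bound_def)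
next
  case True
  define l where "l = len (iv c)"
  define M where "M = max l (1 / real T)"
  have M: "0 < M" and "1 / real T \<le> M" using T by (auto simp: M_def less_max_iff_disj)
  have "4 * L * M \<le> len (rng c)"
    using n True split_threshold_eq[of L] L by (simp add: live_count_ok_def l_def M_def)
  moreover have "2 * L * l \<le> 2 * L * M" using L by (simp add: M_def)
  ultimately have "2 * L * M \<le> len (rng c) - 2 * L * l" by linarith
  then have "2 ^ n * (2 * L * M) \<le> 2 ^ n * (len (rng c) - 2 * L * l)"
    by (simp add: mult_left_mono)
  also have "\<dots> \<le> 4 * range_budget L T c"
    using n True by (simp add: live_count_ok_def l_def)
  finally have key: "2 ^ n * (2 * L * M) \<le> 4 * range_budget L T c" .
  show ?thesis
  proof (cases "dub c")
    case True
    then have "L * (2 ^ n * M) \<le> L * 2" using key by (simp add: range_budget_def ac_simps)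
    then have "2 ^ n * M \<le> 2" using L by simp
    then have "2 ^ n * (1 / real T) \<le> 2"
      using \<open>1 / real T \<le> M\<close> by (smt (verit) mult_left_mono zero_le_power)
    then have "real (2 ^ Suc n) \<le> real (4 * T)" using T by (simp add: field_simps)
    then show ?thesis using True by (simp only: of_nat_le_iff query_bound_def) simp
  next
    case False
    have "range_budget L T c = 4 * L * max (2 * l) (1 / real T)"
      using False split_threshold_eq[of L] L by (simp add: range_budget_def l_def)
    also have "\<dots> \<le> 4 * L * (2 * M)" using L M by (intro mult_left_mono) (auto simp: M_def)
    finally have "2 ^ n * (2 * L * M) \<le> 2 ^ 4 * (2 * L * M)" using key by simp
    then have "(2::real) ^ n \<le> 2 ^ 4" using L M by simp
    then have "n \<le> 4" using power_increasing_iff[of "2::real" n 4] by simp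
    then show ?thesis by (simp add: query_bound_def)
  qed
qed

lemma query_bound_le_ln:
  assumes T: "2 \<le> T" and n: "query_bound T d n"
  shows "real n \<le> 8 * ln (real T)"
proof -
  have ln2: "2 / 3 \<le> ln (2::real)" by (rule ln2_ge_two_thirds)
  have lnT: "ln 2 \<le> ln (real T)" using T by simp
  consider "n \<le> 5" | "2 ^ n \<le> 4 * T" using n by (auto simp: query_bound_def)
  then show ?thesis
  proof cases
    case 1
    then show ?thesis using ln2 lnT by linarith
  next
    case 2
    then have "real (2 ^ n) \<le> real (4 * T)" by (simp only: of_nat_le_iff)
    then have "ln (2 ^ n) \<le> ln (4 * real T)" using T by simp
    also have "\<dots> = 2 * ln 2 + ln (real T)"
      using T ln_realpow[of 2 2] by (simp add: ln_mult)
    finally have "real n * ln 2 \<le> 2 * ln 2 + ln (real T)" by (simp add: ln_realpow)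
    moreover have "real n * (2 / 3) \<le> real n * ln 2" using ln2 by (intro mult_left_mono) auto
    ultimately show ?thesis using lnT ln2 by linarith
  qed
qed

definition replace_cell :: "cell \<Rightarrow> cell list \<Rightarrow> cell list \<Rightarrow> cell list" where
  "replace_cell c cs P = concat (map (\<lambda>d. if d = c then cs else [d]) P)"

lemma set_replace_cell: "c \<in> set P \<Longrightarrow> set (replace_cell c cs P) = set P - {c} \<union> set cs"
  unfolding replace_cell_def by auto

lemma pairwise_apart_replace_cell:
  assumes P: "pairwise (\<lambda>d e. apart (iv d) (iv e)) (set P)" and c: "c \<in> set P"
    and cs: "pairwise (\<lambda>d e. apart (iv d) (iv e)) (set cs)"
    and sub: "\<And>e. e \<in> set cs \<Longrightarrow> subinterval (iv e) (iv c)"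
  shows "pairwise (\<lambda>d e. apart (iv d) (iv e)) (set (replace_cell c cs P))"
proof -
  have cross: "apart (iv e) (iv d) \<and> apart (iv d) (iv e)"
    if d: "d \<in> set P - {c}" and e: "e \<in> set cs" for d e
  proof -
    have "apart (iv c) (iv d)" using pairwiseD[OF P c, of d] d by blast
    then have "apart (iv e) (iv d)" using apart_subinterval sub[OF e] by blast
    then show ?thesis using apart_commute[of "iv e" "iv d"] by simp
  qed
  show ?thesis unfolding set_replace_cell[OF c]
  proof (rule pairwiseI)
    fix d e assume "d \<in> set P - {c} \<union> set cs" "e \<in> set P - {c} \<union> set cs" "d \<noteq> e"
    then show "apart (iv d) (iv e)"
      using pairwiseD[OF P, of d e] pairwiseD[OF cs, of d e] cross[of d e] cross[of e d] by blast
  qed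
qed

definition subdivided :: "cell list \<Rightarrow> real \<times> real \<Rightarrow> bool" where
  "subdivided P I \<longleftrightarrow> (\<forall>d\<in>set P. apart (iv d) I \<or> subinterval (iv d) I \<and> len (iv d) < len I)"

lemma subdivided_replace_cell:
  assumes I: "subdivided P I" and c: "c \<in> set P"
    and sub: "\<And>e. e \<in> set cs \<Longrightarrow> subinterval (iv e) (iv c)"
  shows "subdivided (replace_cell c cs P) I"
proof -
  have "apart (iv e) I \<or> subinterval (iv e) I \<and> len (iv e) < len I" if e: "e \<in> set cs" for e
  proof -
    have "apart (iv c) I \<or> subinterval (iv c) I \<and> len (iv c) < len I"
      using I c unfolding subdivided_def by blast
    moreover have "len (iv e) \<le> len (iv c)" using len_subinterval sub[OF e] .
    ultimately show ?thesis
      using apart_subinterval sub[OF e] unfolding subinterval_def by fastforce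
  qed
  then show ?thesis using I unfolding subdivided_def set_replace_cell[OF c] by blast
qed

lemma subdivided_replace_cell_self:
  assumes P: "pairwise (\<lambda>d e. apart (iv d) (iv e)) (set P)" and c: "c \<in> set P"
    and cs: "\<And>e. e \<in> set cs \<Longrightarrow> subinterval (iv e) (iv c) \<and> len (iv e) < len (iv c)"
  shows "subdivided (replace_cell c cs P) (iv c)"
  unfolding subdivided_def set_replace_cell[OF c]
proof
  fix d assume "d \<in> set P - {c} \<union> set cs"
  then show "apart (iv d) (iv c) \<or> subinterval (iv d) (iv c) \<and> len (iv d) < len (iv c)"
    using pairwiseD[OF P, of d c] c cs[of d] by blast
qed

text \<open>D I records whether I has been marked dubious so far; the last clause concerns the
  intervals that have left the partition.\<close>
definition run_invariant ::
    "real \<Rightarrow> nat \<Rightarrow> cell list \<Rightarrow> round_rec list \<Rightarrow> (real \<times> real \<Rightarrow> bool) \<Rightarrow> bool" where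
  "run_invariant L T P rs D \<longleftrightarrow>
     pairwise (\<lambda>d e. apart (iv d) (iv e)) (set P) \<and>
     (\<forall>c\<in>set P. valid_cell L T c \<and> live_count_ok L T c (num_queries rs (iv c))) \<and>
     (\<forall>I. I \<notin> iv ` set P \<longrightarrow>
        num_queries rs I = 0 \<or> subdivided P I \<and> query_bound T (D I) (num_queries rs I))"

lemma run_invariant_mono:
  "run_invariant L T P rs D \<Longrightarrow> (\<And>I. D I \<Longrightarrow> D' I) \<Longrightarrow> run_invariant L T P rs D'"
  unfolding run_invariant_def using query_bound_mono by blast

lemma fresh_interval_unqueried:
  assumes inv: "run_invariant L T P rs D" and c: "c \<in> set P" and L: "0 \<le> L"
    and e: "e \<in> set (update L T c s)" and new: "iv e \<noteq> iv c"
  shows "num_queries rs (iv e) = 0"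
proof -
  have "valid_cell L T c" using inv c by (simp add: run_invariant_def)
  then have "valid_cell L T e" and sub: "subinterval (iv e) (iv c)"
    and shorter: "len (iv e) < len (iv c)"
    using mem_update_cellD[OF _ e L] new by auto
  then have not_apart: "\<not> apart (iv e) (iv c)"
    using subinterval_not_apart by (simp add: valid_cell_def)
  have "iv e \<notin> iv ` set P"
  proof
    assume "iv e \<in> iv ` set P"
    then obtain d where d: "d \<in> set P" "iv d = iv e" by auto
    with new have "d \<noteq> c" by auto
    then have "apart (iv d) (iv c)"
      using inv c d unfolding run_invariant_def by (auto dest: pairwiseD)
    with not_apart d show False by simp
  qed
  moreover have "\<not> subdivided P (iv e)"
  proof
    assume "subdivided P (iv e)"
    then have "apart (iv c) (iv e) \<or> subinterval (iv c) (iv e) \<and> len (iv c) < len (iv e)"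
      using c unfolding subdivided_def by blast
    then show False using not_apart apart_commute[of "iv c"] shorter by auto
  qed
  ultimately show ?thesis using inv unfolding run_invariant_def by blast
qed

lemma num_queries_snoc:
  "num_queries (rs @ [(x, q, s, cor, J)]) I =
     (if I = J then Suc (num_queries rs I) else num_queries rs I)"
  by (simp add: num_queries_def)

context
  fixes L :: real and T :: nat and P :: "cell list" and rs :: "round_rec list"
    and D :: "real \<times> real \<Rightarrow> bool" and c :: cell and s :: bool
  assumes inv: "run_invariant L T P rs D" and c: "c \<in> set P" and L: "0 < L"
begin

lemma live_cell_step:
  assumes e: "e \<in> set (replace_cell c (update L T c s) P)"
  shows "valid_cell L T e \<and>
    live_count_ok L T e (num_queries (rs @ [(x, q, s, cor, iv c)]) (iv e))"
proof -
  have valid_c: "valid_cell L T c" and live_c: "live_count_ok L T c (num_queries rs (iv c))"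
    using inv c by (auto simp: run_invariant_def)
  consider (kept) "e \<in> set P" "e \<noteq> c" | (child) "e \<in> set (update L T c s)"
    using e set_replace_cell[OF c] by blast
  then show ?thesis
  proof cases
    case kept
    then have "apart (iv e) (iv c)" using inv c by (auto simp: run_invariant_def dest: pairwiseD)
    then have "iv e \<noteq> iv c" using valid_c by (auto simp: apart_def valid_cell_def)
    then show ?thesis using inv kept by (simp add: run_invariant_def num_queries_snoc)
  next
    case child
    have e_props: "valid_cell L T e \<and> (iv e = iv c \<or> \<not> qlo e)"
      using mem_update_cellD[OF valid_c child less_imp_le[OF L]] by blast
    show ?thesis
    proof (cases "iv e = iv c")
      case True
      then show ?thesis
        using e_props live_count_update[OF less_imp_le[OF L] valid_c live_c child]
        by (simp add: num_queries_snoc)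
    next
      case False
      then have "num_queries rs (iv e) = 0"
        using fresh_interval_unqueried[OF inv c less_imp_le[OF L] child] by simp
      then show ?thesis using e_props False by (simp add: num_queries_snoc live_count_ok_def)
    qed
  qed
qed

lemma retired_interval_step:
  fixes x q :: real and cor :: bool
  assumes T: "0 < T" and D: "\<And>I. D I \<Longrightarrow> D' I" and dub: "dub c \<Longrightarrow> D' (iv c)"
    and I: "I \<notin> iv ` set (replace_cell c (update L T c s) P)"
  defines "n \<equiv> num_queries (rs @ [(x, q, s, cor, iv c)]) I"
  shows "n = 0 \<or> subdivided (replace_cell c (update L T c s) P) I \<and> query_bound T (D' I) n"
proof -
  have valid_c: "valid_cell L T c"
    using inv c by (simp add: run_invariant_def)
  have sub: "subinterval (iv e) (iv c)" if "e \<in> set (update L T c s)" for e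
    using mem_update_cellD[OF valid_c that less_imp_le[OF L]] by blast
  show ?thesis
  proof (cases "I = iv c")
    case True
    have "len (iv e) < len (iv c)" if e: "e \<in> set (update L T c s)" for e
    proof -
      have "iv e \<noteq> iv c" using I True e set_replace_cell[OF c] by (metis UnI2 image_eqI)
      then show ?thesis using mem_update_cellD[OF valid_c e less_imp_le[OF L]] by blast
    qed
    then have "subdivided (replace_cell c (update L T c s) P) I"
      using True sub inv subdivided_replace_cell_self[OF _ c]
      unfolding run_invariant_def by blast
    moreover have "query_bound T (D' I) n"
      using live_count_bound[OF L T valid_c] inv c dub True
      by (auto simp: n_def num_queries_snoc run_invariant_def intro: query_bound_mono)
    ultimately show ?thesis by blast
  next
    case False
    then have "I \<notin> iv ` set P" using I set_replace_cell[OF c] by auto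
    then have "num_queries rs I = 0 \<or> subdivided P I \<and> query_bound T (D I) (num_queries rs I)"
      using inv unfolding run_invariant_def by blast
    then show ?thesis
      using subdivided_replace_cell[OF _ c sub] False D query_bound_mono
      by (metis n_def num_queries_snoc)
  qed
qed

end

lemma run_invariant_step:
  assumes inv: "run_invariant L T P rs D" and c: "c \<in> set P" and L: "0 < L" and T: "0 < T"
    and D: "\<And>I. D I \<Longrightarrow> D' I" and dub: "dub c \<Longrightarrow> D' (iv c)"
  shows "run_invariant L T (replace_cell c (update L T c s) P) (rs @ [(x, q, s, cor, iv c)]) D'"
proof -
  have valid_c: "valid_cell L T c" and apart_P: "pairwise (\<lambda>d e. apart (iv d) (iv e)) (set P)"
    using inv c by (auto simp: run_invariant_def)
  have "pairwise (\<lambda>d e. apart (iv d) (iv e)) (set (replace_cell c (update L T c s) P))"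
    using pairwise_apart_replace_cell[OF apart_P c pairwise_apart_update]
      mem_update_cellD[OF valid_c _ less_imp_le[OF L]] by blast
  then show ?thesis
    using live_cell_step[OF inv c L] retired_interval_step[OF inv c L T, where D' = D', OF D dub]
    unfolding run_invariant_def by blast
qed

lemma run_invariant_init: "run_invariant L T (init_part L) [] D"
proof -
  define cell where "cell k = fresh_cell (real k / 8, real (Suc k) / 8) (0, L)" for k :: nat
  have P: "set (init_part L) = cell ` {0..<8}"
    unfolding init_part_def cell_def by auto
  have "apart (iv (cell j)) (iv (cell k))" if "j \<noteq> k" for j k
  proof -
    from that have "Suc j \<le> k \<or> Suc k \<le> j" by linarith
    then have "real (Suc j) \<le> real k \<or> real (Suc k) \<le> real j" by (simp only: of_nat_le_iff)
    then show ?thesis by (auto simp: cell_def fresh_cell_def apart_def divide_right_mono)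
  qed
  then have "pairwise (\<lambda>d e. apart (iv d) (iv e)) (set (init_part L))"
    unfolding P pairwise_image by (auto simp: pairwise_def)
  moreover have "valid_cell L T (cell k)" for k
  proof -
    have iv_len: "len (iv (cell k)) = 1 / 8"
      by (simp add: cell_def fresh_cell_def len_def field_simps)
    have "len (chk (cell k)) = L" by (simp add: cell_def fresh_cell_def len_def)
    then have "len (chk (cell k)) \<le> split_threshold L T (2 * len (iv (cell k)))"
      unfolding iv_len split_threshold_def by simp
    then show ?thesis by (simp add: valid_cell_def cell_def fresh_cell_def)
  qed
  moreover have "live_count_ok L T (cell k) 0" for k
    by (simp add: cell_def fresh_cell_def live_count_ok_def)
  ultimately show ?thesis
    unfolding run_invariant_def P by (simp add: num_queries_def)
qed

lemma run_Suc_cases: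
  obtains (idle) "run L T f AX AC (Suc t) = run L T f AX AC t"
  | (query) c s x q cor where "c \<in> set (fst (run L T f AX AC t))"
    "run L T f AX AC (Suc t) =
      (replace_cell c (update L T c s) (fst (run L T f AX AC t)),
       snd (run L T f AX AC t) @ [(x, q, s, cor, iv c)])"
proof -
  obtain P rs where r: "run L T f AX AC t = (P, rs)" by fastforce
  define x where "x = AX (public_hist rs)"
  show ?thesis
  proof (cases "find (in_cell x) P")
    case None
    then show ?thesis using idle r by (simp add: x_def)
  next
    case (Some c)
    define q where "q = guess c"
    define cor where "cor = AC (public_hist rs) x q"
    define s where "s = (if cor then \<not> sig (q - f x) else sig (q - f x))"
    have "c \<in> set P" using Some by (auto simp: find_Some_iff)
    moreover have "run L T f AX AC (Suc t) =
        (replace_cell c (update L T c s) P, rs @ [(x, q, s, cor, iv c)])"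
      using r Some unfolding x_def q_def cor_def s_def replace_cell_def by (simp add: Let_def)
    ultimately show ?thesis using query r by simp
  qed
qed

lemma run_invariant_holds:
  assumes L: "0 < L" and T: "0 < T"
  shows "run_invariant L T (fst (run L T f AX AC t)) (snd (run L T f AX AC t))
    (\<lambda>I. \<exists>t'\<le>t. \<exists>d\<in>set (fst (run L T f AX AC t')). iv d = I \<and> dub d)"
proof (induction t)
  case 0
  show ?case using run_invariant_init by simp
next
  case (Suc t)
  have mono: "\<exists>t'\<le>Suc t. \<exists>d\<in>set (fst (run L T f AX AC t')). iv d = I \<and> dub d"
    if "\<exists>t'\<le>t. \<exists>d\<in>set (fst (run L T f AX AC t')). iv d = I \<and> dub d" for I
    using that le_SucI by blast
  from run_Suc_cases[of L T f AX AC t] show ?case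
  proof cases
    case idle
    then show ?thesis using run_invariant_mono[OF Suc mono] by simp
  next
    case (query c s x q cor)
    have dub: "\<exists>t'\<le>Suc t. \<exists>d\<in>set (fst (run L T f AX AC t')). iv d = iv c \<and> dub d" if "dub c"
      using query(1) that le_SucI[OF order_refl] by blast
    show ?thesis
      unfolding query(2) fst_conv snd_conv
      by (rule run_invariant_step[OF Suc query(1) L T]) (use mono dub in auto)
  qed
qed

lemma run_query_bound:
  assumes L: "0 < L" and T: "0 < T"
  shows "query_bound T (marked_dubious L T f AX AC I) (num_queries (snd (run L T f AX AC T)) I)"
proof -
  let ?P = "fst (run L T f AX AC T)" and ?n = "num_queries (snd (run L T f AX AC T)) I"
  have inv: "run_invariant L T ?P (snd (run L T f AX AC T)) (marked_dubious L T f AX AC)"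
    using run_invariant_holds[OF L T, of f AX AC T] by (simp add: marked_dubious_def[abs_def])
  show ?thesis
  proof (cases "I \<in> iv ` set ?P")
    case True
    then obtain d where d: "d \<in> set ?P" "iv d = I" by auto
    then have "query_bound T (dub d) (Suc ?n)"
      using inv live_count_bound[OF L T] unfolding run_invariant_def by blast
    moreover have "dub d \<Longrightarrow> marked_dubious L T f AX AC I"
      using d unfolding marked_dubious_def by blast
    ultimately show ?thesis by (blast intro: query_bound_Suc query_bound_mono)
  next
    case False
    then have "?n = 0 \<or> query_bound T (marked_dubious L T f AX AC I) ?n"
      using inv unfolding run_invariant_def by blast
    then show ?thesis by (auto simp: query_bound_def)
  qed
qed

theorem lemma21:
  "\<exists>c1 c2 :: real. \<forall>(L::real) (T::nat) (f::real \<Rightarrow> real) (C::nat) AX AC.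
     L > 0 \<longrightarrow> T \<ge> 2 \<longrightarrow>
     L-lipschitz_on {0..1} f \<longrightarrow> (\<forall>x\<in>{0..1}. f x \<in> {0..L}) \<longrightarrow>
     (\<forall>h. AX h \<in> {0..1}) \<longrightarrow>
     num_corrupted (snd (run L T f AX AC T)) \<le> C \<longrightarrow>
     (\<forall>I. appears L T f AX AC I \<longrightarrow>
        (marked_dubious L T f AX AC I \<longrightarrow>
           real (num_queries (snd (run L T f AX AC T)) I) \<le> c1 * ln (real T)) \<and>
        (\<not> marked_dubious L T f AX AC I \<longrightarrow>
           real (num_queries (snd (run L T f AX AC T)) I) \<le> c2))"
proof (intro exI allI impI conjI)
  fix L :: real and T :: nat and f :: "real \<Rightarrow> real" and AX AC and I :: "real \<times> real"
  assume L: "L > 0" and T: "T \<ge> 2"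
  have bound: "query_bound T (marked_dubious L T f AX AC I) (num_queries (snd (run L T f AX AC T)) I)"
    using L T by (intro run_query_bound) auto
  then show "real (num_queries (snd (run L T f AX AC T)) I) \<le> 8 * ln (real T)"
    by (rule query_bound_le_ln[OF T])
  from bound show "\<not> marked_dubious L T f AX AC I \<Longrightarrow>
      real (num_queries (snd (run L T f AX AC T)) I) \<le> 5"
    by (simp add: query_bound_def)
qed

end
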